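(* For every integer $d\ge 3$ there exists a finite Borel measure $\mu$ on $\mathbb{R}^d$, vanishing on every affine hyperplane, such that no $d$ mutually orthogonal hyperplanes $H_1,\dots,H_d\subset\mathbb{R}^d$ define an orthogonal equipartition of $\mu$.
   Context: Hyperplanes $H_1,\dots,H_d\subset\mathbb{R}^d$ define an orthogonal equipartition of a finite Borel measure $\mu$ on $\mathbb{R}^d$ if they are mutually orthogonal (their normal vectors are pairwise orthogonal) and each of the $2^d$ open regions into which they divide $\mathbb{R}^d$ (the sets $\bigcap_{i=1}^d H_i^{s_i}$, $s_i\in\{+,-\}$, where $H_i^{+},H_i^{-}$ are the two open half-spaces bounded by $H_i$) has $\mu$-measure $\mu(\mathbb{R}^d)/2^d$. *)

theory Defs
  imports "HOL-Analysis.Analysis"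
begin

definition open_halfspace :: "bool \<Rightarrow> 'a::real_inner \<Rightarrow> real \<Rightarrow> 'a set" where
  "open_halfspace s a b = (if s then {x. a \<bullet> x > b} else {x. a \<bullet> x < b})"

definition orthogonal_equipartition ::
  "(real^'n) measure \<Rightarrow> ('n::finite \<Rightarrow> real^'n) \<Rightarrow> ('n \<Rightarrow> real) \<Rightarrow> bool" where
  "orthogonal_equipartition M a b \<longleftrightarrow>
     (\<forall>i. a i \<noteq> 0) \<and>
     (\<forall>i j. i \<noteq> j \<longrightarrow> a i \<bullet> a j = 0) \<and>
     (\<forall>s :: 'n \<Rightarrow> bool.
        emeasure M (\<Inter>i. open_halfspace (s i) (a i) (b i)) = emeasure M UNIV / 2 ^ CARD('n))"

end

theory Submission
  imports Defs "HOL-Computational_Algebra.Polynomial" "HOL-Library.Cardinality"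
begin

text \<open>Let \<open>\<mu>\<close> be the image of Lebesgue measure on a short interval \<open>(0, \<epsilon>)\<close> under the
  moment curve \<open>t \<mapsto> (t, t^2, \<dots>, t^d)\<close>. A hyperplane meets the curve where a nonzero
  polynomial of degree at most \<open>d\<close> vanishes, so \<open>\<mu>\<close> vanishes on hyperplanes. If a hyperplane
  with unit normal \<open>u\<close> crosses the curve more than \<open>m\<close> times, Rolle's theorem makes the first
  \<open>m\<close> coordinates of \<open>u\<close> of order \<open>\<epsilon>\<close>; since \<open>d\<close> mutually orthogonal unit normals form an
  orthogonal matrix, at most \<open>d - m\<close> of them can do so. Hence \<open>d\<close> orthogonal hyperplanes cross
  the curve at most \<open>d + (d - 1) + \<dots> + 1 = d (d + 1) / 2\<close> times in total, cutting it into at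
  most \<open>d (d + 1) / 2 + 1 < 2^d\<close> arcs, each inside a single orthant. An equipartition would
  give every one of the \<open>2^d\<close> orthants positive measure.\<close>

lemma pderiv_roots_between:
  fixes p :: "real poly"
  assumes "finite S" "card S = Suc n" "\<And>x. x \<in> S \<Longrightarrow> poly p x = 0"
  shows "\<exists>T. finite T \<and> card T = n \<and> (\<forall>x\<in>T. poly (pderiv p) x = 0 \<and> Min S < x \<and> x < Max S)"
  using assms
proof (induction n arbitrary: S)
  case 0
  then show ?case by (intro exI[of _ "{}"]) auto
next
  case (Suc n)
  define M where "M = Max S"
  define S' where "S' = S - {M}"
  have "S \<noteq> {}" using Suc.prems by auto
  then have "M \<in> S" using Suc.prems by (simp add: M_def)
  then have S': "finite S'" "card S' = Suc n"
    using Suc.prems by (auto simp: S'_def)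
  then have "S' \<noteq> {}" by auto
  obtain T where T: "finite T" "card T = n" "\<forall>x\<in>T. poly (pderiv p) x = 0 \<and> Min S' < x \<and> x < Max S'"
    using Suc.IH[OF S'] Suc.prems(3) by (auto simp: S'_def)
  define M' where "M' = Max S'"
  have "M' \<in> S'" using S' \<open>S' \<noteq> {}\<close> by (simp add: M'_def)
  then have "M' < M" "Min S \<le> M'"
    using Suc.prems(1) by (auto simp: M_def S'_def order.strict_iff_order)
  obtain z where z: "M' < z" "z < M" "poly (pderiv p) z = 0"
  proof -
    obtain z where "M' < z" "z < M" "poly p M - poly p M' = (M - M') * poly (pderiv p) z"
      using poly_MVT[OF \<open>M' < M\<close>] by blast
    moreover have "poly p M = 0" "poly p M' = 0"
      using \<open>M \<in> S\<close> \<open>M' \<in> S'\<close> Suc.prems(3) by (auto simp: S'_def)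
    ultimately show ?thesis using that by auto
  qed
  have "z \<notin> T" using T(3) z(1) by (auto simp: M'_def)
  moreover have "Min S \<le> Min S'" "Max S' \<le> Max S"
    using Suc.prems(1) \<open>S' \<noteq> {}\<close> by (auto simp: S'_def)
  ultimately show ?case
    using T z \<open>Min S \<le> M'\<close> \<open>M' < M\<close>
    by (intro exI[of _ "insert z T"]) (auto simp: M_def M'_def card_insert_if)
qed

lemma higher_pderiv_root_in_interval:
  fixes p :: "real poly"
  assumes "finite S" "m < card S" "S \<subseteq> {a<..<b}" "\<And>x. x \<in> S \<Longrightarrow> poly p x = 0"
  shows "\<exists>t\<in>{a<..<b}. poly ((pderiv ^^ m) p) t = 0"
  using assms
proof (induction m arbitrary: p S)
  case 0
  then obtain x where "x \<in> S" by fastforce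
  then show ?case using 0 by auto
next
  case (Suc m)
  obtain S' where S': "S' \<subseteq> S" "card S' = Suc (Suc m)" "finite S'"
    using obtain_subset_with_card_n[of "Suc (Suc m)" S] Suc.prems(2) by auto
  obtain T where T: "finite T" "card T = Suc m" "\<forall>x\<in>T. poly (pderiv p) x = 0 \<and> Min S' < x \<and> x < Max S'"
    using pderiv_roots_between[OF S'(3,2)] S'(1) Suc.prems(4) by blast
  have "Min S' \<in> S'" "Max S' \<in> S'" using S'(2,3) by (auto intro!: Min_in Max_in)
  then have "T \<subseteq> {a<..<b}" using S'(1) Suc.prems(3) T(3) by force
  then obtain t where "t \<in> {a<..<b}" "poly ((pderiv ^^ m) (pderiv p)) t = 0"
    using Suc.IH[of T "pderiv p"] T by auto
  then show ?case by (auto simp: funpow_Suc_right simp del: funpow.simps)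
qed

lemma abs_coeff_le_of_higher_pderiv_root:
  fixes p :: "real poly"
  assumes deg: "degree p \<le> d" and bound: "\<And>k. 1 \<le> k \<Longrightarrow> \<bar>coeff p k\<bar> \<le> B"
    and t: "0 < t" "t \<le> 1" and root: "poly ((pderiv ^^ m) p) t = 0"
  shows "\<bar>coeff p m\<bar> \<le> B * t * (\<Sum>k=1..d. pochhammer (real (Suc k)) m)"
proof -
  define q where "q = (pderiv ^^ m) p"
  have coeff_q: "coeff q k = pochhammer (real (Suc k)) m * coeff p (k + m)" for k
    by (simp add: q_def coeff_higher_pderiv)
  have "degree q \<le> d"
    using deg by (intro degree_le) (auto simp: coeff_q coeff_eq_0)
  then have "0 = (\<Sum>k\<le>d. coeff q k * t ^ k)"
    using root arg_cong[OF poly_as_sum_of_monoms', of q d "\<lambda>r. poly r t"]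
    by (simp add: q_def[symmetric] poly_sum poly_monom)
  also have "\<dots> = coeff q 0 + (\<Sum>k=1..d. coeff q k * t ^ k)"
    by (simp add: atMost_atLeast0 sum.atLeast_Suc_atMost)
  finally have "\<bar>coeff q 0\<bar> = \<bar>\<Sum>k=1..d. coeff q k * t ^ k\<bar>" by linarith
  also have "\<dots> \<le> (\<Sum>k=1..d. \<bar>coeff q k * t ^ k\<bar>)" by (rule sum_abs)
  also have "\<dots> \<le> (\<Sum>k=1..d. pochhammer (real (Suc k)) m * B * t)"
  proof (rule sum_mono)
    fix k assume "k \<in> {1..d}"
    then have "t ^ k \<le> t" using t by (simp add: power_le_one power_decreasing[of 1 k t, simplified])
    moreover have "\<bar>coeff p (k + m)\<bar> \<le> B" using \<open>k \<in> {1..d}\<close> bound by simp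
    moreover have "0 \<le> pochhammer (real (Suc k)) m" by (simp add: pochhammer_nonneg)
    ultimately show "\<bar>coeff q k * t ^ k\<bar> \<le> pochhammer (real (Suc k)) m * B * t"
      using t by (simp add: coeff_q abs_mult mult.assoc mult_left_mono mult_mono)
  qed
  also have "\<dots> = B * t * (\<Sum>k=1..d. pochhammer (real (Suc k)) m)"
    by (simp add: sum_distrib_left mult_ac)
  finally have "fact m * \<bar>coeff p m\<bar> \<le> B * t * (\<Sum>k=1..d. pochhammer (real (Suc k)) m)"
    by (simp add: coeff_q pochhammer_fact[symmetric] abs_mult)
  moreover have "\<bar>coeff p m\<bar> \<le> fact m * \<bar>coeff p m\<bar>"
    using fact_ge_1[of m, where 'a=real] by (simp add: mult_le_cancel_right1)
  ultimately show ?thesis by linarith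
qed

lemma sum_column_power2_orthonormal:
  fixes u :: "'n::finite \<Rightarrow> real^'n"
  assumes "\<And>i. norm (u i) = 1" "\<And>i k. i \<noteq> k \<Longrightarrow> u i \<bullet> u k = 0"
  shows "(\<Sum>i\<in>UNIV. (u i $ j)\<^sup>2) = 1"
proof -
  define U :: "real^'n^'n" where "U = (\<chi> i. u i)"
  have "row i U = u i" for i by (simp add: U_def row_def vec_eq_iff)
  then have "orthogonal_matrix U"
    using assms by (simp add: orthogonal_matrix_orthonormal_rows orthogonal_def)
  then have "column j U \<bullet> column j U = 1"
    by (simp add: orthogonal_matrix_orthonormal_columns norm_eq_1)
  then show ?thesis by (simp add: U_def column_def inner_vec_def power2_eq_square)
qed

text \<open>Normalised, the \<open>a i\<close> are the rows of an orthogonal matrix, whose columns have unit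
  length; the rows in \<open>R\<close> contribute almost nothing to the columns in \<open>J\<close>.\<close>

lemma card_rows_small_on_coordinates:
  fixes a :: "'n::finite \<Rightarrow> real^'n"
  assumes nz: "\<And>i. a i \<noteq> 0" and orth: "\<And>i k. i \<noteq> k \<Longrightarrow> a i \<bullet> a k = 0"
    and small: "\<And>i j. i \<in> R \<Longrightarrow> j \<in> J \<Longrightarrow> \<bar>a i $ j\<bar> \<le> \<delta> * norm (a i)"
    and \<delta>: "0 \<le> \<delta>" "real CARD('n) * \<delta> < 1"
  shows "card R + card J \<le> CARD('n)"
proof (rule ccontr)
  assume "\<not> card R + card J \<le> CARD('n)"
  then have cR: "real (card (- R)) + 1 \<le> real (card J)"
    by (simp add: Compl_eq_Diff_UNIV card_Diff_subset card_mono of_nat_diff)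
  define u where "u i = a i /\<^sub>R norm (a i)" for i
  have norm_u: "norm (u i) = 1" for i using nz by (simp add: u_def)
  have small_u: "(u i $ j)\<^sup>2 \<le> \<delta>\<^sup>2" if "i \<in> R" "j \<in> J" for i j
  proof -
    have "\<bar>u i $ j\<bar> \<le> \<delta>"
      using small[OF that] nz[of i] by (simp add: u_def field_simps)
    then show ?thesis by (metis abs_ge_zero power2_abs power_mono)
  qed
  have row_u: "(\<Sum>j\<in>J. (u i $ j)\<^sup>2) \<le> 1" for i
  proof -
    have "(\<Sum>j\<in>J. (u i $ j)\<^sup>2) \<le> (\<Sum>j\<in>UNIV. (u i $ j)\<^sup>2)" by (rule sum_mono2) auto
    also have "\<dots> = 1"
      using norm_u[of i] by (simp add: norm_eq_1 inner_vec_def power2_eq_square)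
    finally show ?thesis .
  qed
  have "real (card J) = (\<Sum>j\<in>J. \<Sum>i\<in>UNIV. (u i $ j)\<^sup>2)"
    using sum_column_power2_orthonormal[OF norm_u, of _ ] orth by (simp add: u_def)
  also have "\<dots> = (\<Sum>i\<in>R. \<Sum>j\<in>J. (u i $ j)\<^sup>2) + (\<Sum>i\<in>-R. \<Sum>j\<in>J. (u i $ j)\<^sup>2)"
    by (subst sum.swap) (metis Compl_partition sum.union_disjoint finite Compl_disjoint)
  also have "\<dots> \<le> (\<Sum>i\<in>R. \<Sum>j\<in>J. \<delta>\<^sup>2) + (\<Sum>i\<in>-R. 1)"
    by (intro add_mono sum_mono small_u row_u)
  also have "\<dots> = real (card R) * real (card J) * \<delta>\<^sup>2 + real (card (- R))" by simp
  also have "real (card R) * real (card J) * \<delta>\<^sup>2 \<le> (real CARD('n) * \<delta>)\<^sup>2"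
  proof -
    have "real (card R) * real (card J) \<le> real CARD('n) * real CARD('n)"
      by (intro mult_mono) (simp_all add: card_mono)
    then show ?thesis
      by (simp add: power_mult_distrib mult_right_mono power2_eq_square[of "real CARD('n)"])
  qed
  also have "(real CARD('n) * \<delta>)\<^sup>2 < 1"
    using \<delta> by (simp add: power_less_one_iff)
  finally show False using cR by linarith
qed

lemma continuous_nonvanishing_pos_iff:
  fixes f :: "real \<Rightarrow> real"
  assumes "continuous_on {t..t'} f" "t \<le> t'" "\<And>x. x \<in> {t..t'} \<Longrightarrow> f x \<noteq> 0"
  shows "0 < f t \<longleftrightarrow> 0 < f t'"
proof -
  have "f t \<noteq> 0" "f t' \<noteq> 0" using assms(2,3) by auto
  moreover have "\<not> (f t \<le> 0 \<and> 0 \<le> f t')"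
    using IVT'[of f t 0 t', OF _ _ assms(2,1)] assms(3) by auto
  moreover have "\<not> (f t' \<le> 0 \<and> 0 \<le> f t)"
    using IVT2'[of f t' 0 t, OF _ _ assms(2,1)] assms(3) by auto
  ultimately show ?thesis by linarith
qed

text \<open>Two points of \<open>{lo<..<hi} - Z\<close> with equally many points of \<open>Z\<close> to their left have no
  point of \<open>Z\<close> between them, hence the same sign pattern.\<close>

lemma card_sign_patterns_le:
  fixes f :: "'i \<Rightarrow> real \<Rightarrow> real"
  assumes cont: "\<And>i. continuous_on {lo<..<hi} (f i)" and "finite Z"
    and zeros: "\<And>i t. t \<in> {lo<..<hi} \<Longrightarrow> f i t = 0 \<Longrightarrow> t \<in> Z"
  shows "card ((\<lambda>t i. 0 < f i t) ` ({lo<..<hi} - Z)) \<le> card Z + 1"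
proof -
  define A where "A = {lo<..<hi} - Z"
  define sgns where "sgns t = (\<lambda>i. 0 < f i t)" for t
  define left where "left t = card {z\<in>Z. z < t}" for t
  have same_sgns: "sgns t = sgns t'"
    if "t \<in> A" "t' \<in> A" "t \<le> t'" "left t = left t'" for t t'
  proof -
    have "{z\<in>Z. z < t} = {z\<in>Z. z < t'}"
      using that(3,4) \<open>finite Z\<close> unfolding left_def
      by (intro card_subset_eq) auto
    have no_zero: "x \<notin> Z" if "x \<in> {t..t'}" for x
    proof
      assume "x \<in> Z"
      moreover have "x \<noteq> t" "x \<noteq> t'" using \<open>t \<in> A\<close> \<open>t' \<in> A\<close> \<open>x \<in> Z\<close> by (auto simp: A_def)
      ultimately have "x \<in> {z\<in>Z. z < t'}" "x \<notin> {z\<in>Z. z < t}" using that by auto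
      then show False using \<open>{z\<in>Z. z < t} = {z\<in>Z. z < t'}\<close> by blast
    qed
    have sub: "{t..t'} \<subseteq> {lo<..<hi}" using that(1,2) by (auto simp: A_def)
    show ?thesis unfolding sgns_def
    proof (intro ext continuous_nonvanishing_pos_iff[OF _ \<open>t \<le> t'\<close>])
      show "continuous_on {t..t'} (f i)" for i using cont sub by (rule continuous_on_subset)
      show "f i x \<noteq> 0" if "x \<in> {t..t'}" for i x using zeros no_zero sub that by blast
    qed
  qed
  have "inj_on (\<lambda>s. left (inv_into A sgns s)) (sgns ` A)"
  proof (rule inj_onI)
    fix s s' assume "s \<in> sgns ` A" "s' \<in> sgns ` A"
      and "left (inv_into A sgns s) = left (inv_into A sgns s')"
    then show "s = s'"
      using same_sgns[of "inv_into A sgns s" "inv_into A sgns s'"]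
        same_sgns[of "inv_into A sgns s'" "inv_into A sgns s"]
      by (metis f_inv_into_f inv_into_into linorder_le_cases)
  qed
  moreover have "left t \<in> {..card Z}" for t
    unfolding left_def using \<open>finite Z\<close> by (auto intro: card_mono)
  ultimately have "card (sgns ` A) \<le> card {..card Z}"
    by (intro card_inj_on_le) auto
  then show ?thesis by (simp add: A_def sgns_def)
qed

lemma sum_eq_sum_card_less:
  fixes c :: "'i \<Rightarrow> nat"
  assumes "finite I" "\<And>i. i \<in> I \<Longrightarrow> c i \<le> d"
  shows "(\<Sum>i\<in>I. c i) = (\<Sum>m<d. card {i\<in>I. m < c i})"
proof -
  have "(\<Sum>i\<in>I. c i) = (\<Sum>i\<in>I. \<Sum>m<d. if m < c i then 1 else 0)"
  proof (rule sum.cong)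
    fix i assume "i \<in> I"
    then have "{..<d} \<inter> {m. m < c i} = {..<c i}" using assms(2)[of i] by auto
    then show "c i = (\<Sum>m<d. if m < c i then 1 else 0)"
      by (simp add: sum.If_cases)
  qed simp
  also have "\<dots> = (\<Sum>m<d. card {i\<in>I. m < c i})"
    using assms(1) by (subst sum.swap) (simp add: sum.If_cases Int_def conj_commute)
  finally show ?thesis .
qed

lemma double_sum_diff: "2 * (\<Sum>m<d. d - m) = d * (d + 1)" for d :: nat
proof (induction d)
  case (Suc d)
  have "(\<Sum>m<Suc d. Suc d - m) = (\<Sum>m<d. Suc (d - m)) + 1"
    by (simp add: Suc_diff_le)
  also have "\<dots> = (\<Sum>m<d. d - m) + d + 1"
    unfolding Suc_eq_plus1 sum.distrib by simp
  finally show ?case using Suc.IH by simp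
qed simp

lemma triangular_less_power2: "3 \<le> d \<Longrightarrow> d * (d + 1) + 2 < 2 * (2::nat) ^ d"
proof (induction d rule: dec_induct)
  case (step d)
  have "Suc d * (Suc d + 1) + 2 = (d * (d + 1) + 2) + (2 * d + 2)" by simp
  also have "\<dots> < 2 * (2 * 2 ^ d)"
    using step.IH le_square[of d] distrib_left[of d d 1] by linarith
  finally show ?case by simp
qed simp

lemma sum_diff_less_power2: "3 \<le> d \<Longrightarrow> (\<Sum>m<d. d - m) + 1 < (2::nat) ^ d"
  using double_sum_diff[of d] triangular_less_power2[of d] by linarith

text \<open>\<open>idx\<close> enumerates the coordinates by \<open>0, \<dots>, d - 1\<close>, so that coordinate \<open>j\<close> of the
  curve is \<open>t ^ (idx j + 1)\<close>.\<close>

definition moment_curve :: "('n::finite \<Rightarrow> nat) \<Rightarrow> real \<Rightarrow> real^'n" where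
  "moment_curve idx t = (\<chi> j. t ^ Suc (idx j))"

definition moment_poly :: "('n::finite \<Rightarrow> nat) \<Rightarrow> real^'n \<Rightarrow> real \<Rightarrow> real poly" where
  "moment_poly idx a c = (\<Sum>j\<in>UNIV. monom (a $ j) (Suc (idx j))) - [:c:]"

definition moment_crossings :: "('n::finite \<Rightarrow> nat) \<Rightarrow> real \<Rightarrow> real^'n \<Rightarrow> real \<Rightarrow> real set" where
  "moment_crossings idx \<epsilon> a c = {t\<in>{0<..<\<epsilon>}. a \<bullet> moment_curve idx t = c}"

lemma continuous_on_moment_curve: "continuous_on S (moment_curve idx)"
  unfolding moment_curve_def by (intro continuous_intros)

lemma poly_moment_poly: "poly (moment_poly idx a c) t = a \<bullet> moment_curve idx t - c"
  by (simp add: moment_poly_def moment_curve_def inner_vec_def poly_sum poly_monom)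

lemma coeff_moment_poly:
  "coeff (moment_poly idx a c) (Suc k) = (\<Sum>j\<in>UNIV. if idx j = k then a $ j else 0)"
  by (simp add: moment_poly_def coeff_sum coeff_monom)

lemma coeff_moment_poly_idx:
  assumes "inj idx"
  shows "coeff (moment_poly idx a c) (Suc (idx j)) = a $ j"
proof -
  have "(\<Sum>j'\<in>UNIV. if idx j' = idx j then a $ j' else 0) = (\<Sum>j'\<in>UNIV. if j' = j then a $ j' else 0)"
    using assms by (intro sum.cong) (auto dest: injD)
  then show ?thesis by (simp add: coeff_moment_poly)
qed

lemma abs_coeff_moment_poly_le:
  assumes "inj idx" "1 \<le> k"
  shows "\<bar>coeff (moment_poly idx a c) k\<bar> \<le> norm a"
proof -
  obtain k' where k: "k = Suc k'" using assms(2) by (cases k) auto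
  show ?thesis
  proof (cases "k' \<in> range idx")
    case True
    then show ?thesis
      using coeff_moment_poly_idx[OF assms(1)] component_le_norm_cart k by fastforce
  next
    case False
    then have "coeff (moment_poly idx a c) k = 0"
      by (auto simp: k coeff_moment_poly intro!: sum.neutral)
    then show ?thesis by simp
  qed
qed

lemma degree_moment_poly_le:
  assumes "\<And>j. idx j < d"
  shows "degree (moment_poly idx a c) \<le> d"
proof (rule degree_le, intro allI impI)
  fix k assume "d < k"
  then obtain k' where "k = Suc k'" "d \<le> k'" by (cases k) auto
  then show "coeff (moment_poly idx a c) k = 0"
    using assms by (auto simp: coeff_moment_poly intro!: sum.neutral) (meson leD)
qed

lemma moment_poly_nonzero:
  assumes "inj idx" "a \<noteq> 0"
  shows "moment_poly idx a c \<noteq> 0"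
proof
  assume "moment_poly idx a c = 0"
  then have "a $ j = 0" for j by (metis coeff_0 coeff_moment_poly_idx[OF assms(1)])
  then show False using assms(2) by (simp add: vec_eq_iff)
qed

lemma moment_crossings_subset_roots:
  "moment_crossings idx \<epsilon> a c \<subseteq> {t. poly (moment_poly idx a c) t = 0}"
  by (auto simp: moment_crossings_def poly_moment_poly)

lemma finite_moment_crossings:
  assumes "inj idx" "a \<noteq> 0"
  shows "finite (moment_crossings idx \<epsilon> a c)"
  using moment_crossings_subset_roots poly_roots_finite[OF moment_poly_nonzero[OF assms]]
  by (rule finite_subset)

lemma card_moment_crossings_le:
  assumes "inj idx" "\<And>j. idx j < d" "a \<noteq> 0"
  shows "card (moment_crossings idx \<epsilon> a c) \<le> d"
proof -
  have "card (moment_crossings idx \<epsilon> a c) \<le> card {t. poly (moment_poly idx a c) t = 0}"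
    using moment_crossings_subset_roots poly_roots_finite[OF moment_poly_nonzero[OF assms(1,3)]]
    by (rule card_mono[rotated])
  also have "\<dots> \<le> degree (moment_poly idx a c)"
    by (rule card_poly_roots_bound[OF moment_poly_nonzero[OF assms(1,3)]])
  also have "\<dots> \<le> d" by (rule degree_moment_poly_le[OF assms(2)])
  finally show ?thesis .
qed

definition moment_const :: "nat \<Rightarrow> real" where
  "moment_const d = (\<Sum>m\<le>d. \<Sum>k=1..d. pochhammer (real (Suc k)) m)"

lemma moment_const_nonneg: "0 \<le> moment_const d"
  unfolding moment_const_def by (intro sum_nonneg pochhammer_nonneg) auto

text \<open>By Rolle, the \<open>(idx j + 1)\<close>-th derivative of the crossing polynomial vanishes somewhere
  in \<open>(0, \<epsilon>)\<close>; its constant term is a multiple of \<open>a $ j\<close> and its other terms are \<open>O(\<epsilon>)\<close>.\<close>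

lemma abs_component_le_if_many_moment_crossings:
  assumes "inj idx" "\<And>j. idx j < d" "0 < \<epsilon>" "\<epsilon> \<le> 1"
    and many: "Suc (idx j) < card (moment_crossings idx \<epsilon> a c)"
  shows "\<bar>a $ j\<bar> \<le> norm a * \<epsilon> * moment_const d"
proof -
  define m where "m = Suc (idx j)"
  have "finite (moment_crossings idx \<epsilon> a c)" using many by (intro card_ge_0_finite) simp
  moreover have "moment_crossings idx \<epsilon> a c \<subseteq> {0<..<\<epsilon>}"
    by (auto simp: moment_crossings_def)
  ultimately obtain t where t: "t \<in> {0<..<\<epsilon>}" "poly ((pderiv ^^ m) (moment_poly idx a c)) t = 0"
    using higher_pderiv_root_in_interval many moment_crossings_subset_roots
    unfolding m_def by blast
  have "\<bar>a $ j\<bar> \<le> norm a * t * (\<Sum>k=1..d. pochhammer (real (Suc k)) m)"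
    using abs_coeff_le_of_higher_pderiv_root[OF degree_moment_poly_le abs_coeff_moment_poly_le _ _ t(2)]
      assms t(1) coeff_moment_poly_idx[OF assms(1)] by (simp add: m_def)
  also have "\<dots> \<le> norm a * \<epsilon> * (\<Sum>k=1..d. pochhammer (real (Suc k)) m)"
    using t(1) by (intro mult_right_mono mult_left_mono sum_nonneg pochhammer_nonneg) auto
  also have "\<dots> \<le> norm a * \<epsilon> * moment_const d"
    unfolding moment_const_def using assms(2,3) m_def
    by (intro mult_left_mono member_le_sum sum_nonneg pochhammer_nonneg) (auto simp: Suc_le_eq)
  finally show ?thesis .
qed

lemma sum_card_moment_crossings_le:
  fixes a :: "'n::finite \<Rightarrow> real^'n"
  assumes bij: "bij_betw idx UNIV {..<CARD('n)}"
    and nz: "\<And>i. a i \<noteq> 0" and orth: "\<And>i k. i \<noteq> k \<Longrightarrow> a i \<bullet> a k = 0"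
    and \<epsilon>: "0 < \<epsilon>" "\<epsilon> \<le> 1" "real CARD('n) * (\<epsilon> * moment_const CARD('n)) < 1"
  shows "(\<Sum>i\<in>UNIV. card (moment_crossings idx \<epsilon> (a i) (b i))) \<le> (\<Sum>m<CARD('n). CARD('n) - m)"
proof -
  define d where "d = CARD('n)"
  define Z where "Z i = moment_crossings idx \<epsilon> (a i) (b i)" for i
  have inj: "inj idx" and idx_less: "\<And>j. idx j < d"
    using bij by (auto simp: bij_betw_def d_def)
  have layer: "card {i. m < card (Z i)} + m \<le> d" if "m \<le> d" for m
  proof -
    define J where "J = {j. idx j < m}"
    have "idx ` J = {..<m}" using bij that by (auto simp: J_def d_def bij_betw_def)
    then have "card J = m" using inj by (metis card_image card_lessThan inj_on_subset subset_UNIV)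
    moreover have "card {i. m < card (Z i)} + card J \<le> d"
      unfolding d_def
    proof (rule card_rows_small_on_coordinates[OF nz orth _ _ \<epsilon>(3)])
      show "\<bar>a i $ j\<bar> \<le> \<epsilon> * moment_const CARD('n) * norm (a i)"
        if "i \<in> {i. m < card (Z i)}" "j \<in> J" for i j
        using abs_component_le_if_many_moment_crossings[OF inj idx_less \<epsilon>(1,2), of j "a i" "b i"] that
        by (simp add: J_def Z_def d_def mult_ac)
      show "0 \<le> \<epsilon> * moment_const CARD('n)" using \<epsilon>(1) moment_const_nonneg by simp
    qed
    ultimately show ?thesis by simp
  qed
  have "(\<Sum>i\<in>UNIV. card (Z i)) = (\<Sum>m<d. card {i. m < card (Z i)})"
    using sum_eq_sum_card_less[of UNIV "\<lambda>i. card (Z i)" d]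
      card_moment_crossings_le[OF inj idx_less nz] by (simp add: Z_def)
  also have "\<dots> \<le> (\<Sum>m<d. d - m)"
    using layer by (intro sum_mono) (simp add: le_diff_conv2)
  finally show ?thesis by (simp add: Z_def d_def)
qed

definition moment_measure :: "('n::finite \<Rightarrow> nat) \<Rightarrow> real \<Rightarrow> (real^'n) measure" where
  "moment_measure idx \<epsilon> = distr (restrict_space lborel {0<..<\<epsilon>}) borel (moment_curve idx)"

lemma sets_moment_measure [simp]: "sets (moment_measure idx \<epsilon>) = sets borel"
  by (simp add: moment_measure_def)

lemma emeasure_moment_measure:
  assumes "A \<in> sets borel"
  shows "emeasure (moment_measure idx \<epsilon>) A = emeasure lborel {t\<in>{0<..<\<epsilon>}. moment_curve idx t \<in> A}"
proof -
  have "moment_curve idx \<in> restrict_space lborel {0<..<\<epsilon>} \<rightarrow>\<^sub>M borel"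
    by (intro measurable_restrict_space1)
      (simp add: borel_measurable_continuous_onI continuous_on_moment_curve)
  then have "emeasure (moment_measure idx \<epsilon>) A
      = emeasure (restrict_space lborel {0<..<\<epsilon>}) (moment_curve idx -` A \<inter> {0<..<\<epsilon>})"
    unfolding moment_measure_def using assms by (simp add: emeasure_distr space_restrict_space)
  also have "\<dots> = emeasure lborel {t\<in>{0<..<\<epsilon>}. moment_curve idx t \<in> A}"
    by (subst emeasure_restrict_space) (auto intro!: arg_cong[where f = "emeasure lborel"])
  finally show ?thesis .
qed

lemma emeasure_moment_measure_UNIV:
  "0 \<le> \<epsilon> \<Longrightarrow> emeasure (moment_measure idx \<epsilon>) UNIV = ennreal \<epsilon>"
  by (simp add: emeasure_moment_measure del: greaterThanLessThan_iff)

lemma finite_measure_moment_measure: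
  assumes "0 \<le> \<epsilon>"
  shows "finite_measure (moment_measure idx \<epsilon>)"
proof -
  have "space (moment_measure idx \<epsilon>) = UNIV" by (simp add: moment_measure_def)
  then show ?thesis by (intro finite_measureI) (simp add: emeasure_moment_measure_UNIV assms)
qed

lemma emeasure_moment_measure_hyperplane:
  assumes "inj idx" "a \<noteq> 0"
  shows "emeasure (moment_measure idx \<epsilon>) {x. a \<bullet> x = c} = 0"
proof -
  have "{t\<in>{0<..<\<epsilon>}. moment_curve idx t \<in> {x. a \<bullet> x = c}} = moment_crossings idx \<epsilon> a c"
    by (simp add: moment_crossings_def)
  then show ?thesis
    using finite_moment_crossings[OF assms]
    by (simp add: emeasure_moment_measure closed_hyperplane emeasure_lborel_countable countable_finite)
qed

lemma not_orthogonal_equipartition_moment_measure: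
  fixes a :: "'n::finite \<Rightarrow> real^'n"
  assumes bij: "bij_betw idx UNIV {..<CARD('n)}" and d: "3 \<le> CARD('n)"
    and \<epsilon>: "0 < \<epsilon>" "\<epsilon> \<le> 1" "real CARD('n) * (\<epsilon> * moment_const CARD('n)) < 1"
  shows "\<not> orthogonal_equipartition (moment_measure idx \<epsilon>) a b"
proof
  assume "orthogonal_equipartition (moment_measure idx \<epsilon>) a b"
  then have nz: "\<And>i. a i \<noteq> 0" and orth: "\<And>i k. i \<noteq> k \<Longrightarrow> a i \<bullet> a k = 0"
    and equi: "\<And>s. emeasure (moment_measure idx \<epsilon>) (\<Inter>i. open_halfspace (s i) (a i) (b i))
                 = ennreal \<epsilon> / 2 ^ CARD('n)"
    using \<epsilon>(1) by (auto simp: orthogonal_equipartition_def emeasure_moment_measure_UNIV)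
  have inj: "inj idx" using bij by (simp add: bij_betw_def)
  define f where "f i t = a i \<bullet> moment_curve idx t - b i" for i t
  define Z where "Z = (\<Union>i. moment_crossings idx \<epsilon> (a i) (b i))"
  have "finite Z" using finite_moment_crossings[OF inj nz] by (simp add: Z_def)
  have all_patterns: "s \<in> (\<lambda>t i. 0 < f i t) ` ({0<..<\<epsilon>} - Z)" for s
  proof -
    define orthant where "orthant = (\<Inter>i. open_halfspace (s i) (a i) (b i))"
    have "open orthant"
      unfolding orthant_def open_halfspace_def by (auto intro!: open_INT open_halfspace_gt open_halfspace_lt)
    then have "emeasure lborel {t\<in>{0<..<\<epsilon>}. moment_curve idx t \<in> orthant} \<noteq> 0"
      using equi[of s] \<epsilon>(1)
      by (simp add: orthant_def emeasure_moment_measure ennreal_divide_eq_0_iff power_eq_top_ennreal)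
    then obtain t where t: "t \<in> {0<..<\<epsilon>}" "moment_curve idx t \<in> orthant"
      by (metis (no_types, lifting) Collect_empty_eq emeasure_empty)
    have sgn: "s i = (0 < f i t) \<and> f i t \<noteq> 0" for i
    proof -
      have "moment_curve idx t \<in> open_halfspace (s i) (a i) (b i)"
        using t(2) unfolding orthant_def by blast
      then show ?thesis by (cases "s i") (auto simp: open_halfspace_def f_def)
    qed
    then have "s = (\<lambda>i. 0 < f i t)" by auto
    moreover have "t \<notin> Z" using sgn by (auto simp: Z_def moment_crossings_def f_def)
    ultimately show ?thesis using t(1) by blast
  qed
  have "2 ^ CARD('n) = card (UNIV :: ('n \<Rightarrow> bool) set)" by (simp add: card_fun)
  also have "\<dots> \<le> card Z + 1"
  proof -
    have cont: "continuous_on {0<..<\<epsilon>} (f i)" for i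
      unfolding f_def by (intro continuous_intros continuous_on_moment_curve)
    moreover have "t \<in> Z" if "t \<in> {0<..<\<epsilon>}" "f i t = 0" for i t
      using that by (auto simp: Z_def moment_crossings_def f_def)
    then have "card ((\<lambda>t i. 0 < f i t) ` ({0<..<\<epsilon>} - Z)) \<le> card Z + 1"
      using cont \<open>finite Z\<close> by (intro card_sign_patterns_le) auto
    moreover have "card (UNIV :: ('n \<Rightarrow> bool) set) \<le> card ((\<lambda>t i. 0 < f i t) ` ({0<..<\<epsilon>} - Z))"
      using all_patterns by (intro card_mono) auto
    ultimately show ?thesis by linarith
  qed
  also have "card Z \<le> (\<Sum>i\<in>UNIV. card (moment_crossings idx \<epsilon> (a i) (b i)))"
    unfolding Z_def by (rule card_UN_le) simp
  also have "\<dots> \<le> (\<Sum>m<CARD('n). CARD('n) - m)"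
    by (rule sum_card_moment_crossings_le[OF bij nz orth \<epsilon>])
  finally show False using sum_diff_less_power2[OF d] by simp
qed

theorem theorem1:
  assumes "CARD('n::finite) \<ge> 3"
  shows "\<exists>M :: (real^'n) measure.
           sets M = sets borel \<and> finite_measure M \<and>
           (\<forall>a c. a \<noteq> 0 \<longrightarrow> emeasure M {x. a \<bullet> x = c} = 0) \<and>
           (\<forall>a b. \<not> orthogonal_equipartition M a b)"
proof -
  obtain idx :: "'n \<Rightarrow> nat" where bij: "bij_betw idx UNIV {..<CARD('n)}"
    using ex_bij_betw_finite_nat[of "UNIV :: 'n set"] by (auto simp: atLeast0LessThan)
  then have "inj idx" by (simp add: bij_betw_def)
  define \<epsilon> where "\<epsilon> = 1 / (real CARD('n) * moment_const CARD('n) + 1)"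
  have \<epsilon>: "0 < \<epsilon>" "\<epsilon> \<le> 1" "real CARD('n) * (\<epsilon> * moment_const CARD('n)) < 1"
  proof -
    have "0 \<le> real CARD('n) * moment_const CARD('n)" by (simp add: moment_const_nonneg)
    then show "0 < \<epsilon>" "\<epsilon> \<le> 1" "real CARD('n) * (\<epsilon> * moment_const CARD('n)) < 1"
      by (simp_all add: \<epsilon>_def field_simps)
  qed
  show ?thesis
  proof (intro exI[of _ "moment_measure idx \<epsilon>"] conjI allI impI)
    show "finite_measure (moment_measure idx \<epsilon>)"
      using \<epsilon>(1) by (simp add: finite_measure_moment_measure)
    show "emeasure (moment_measure idx \<epsilon>) {x. a \<bullet> x = c} = 0" if "a \<noteq> 0" for a :: "real^'n" and c
      using emeasure_moment_measure_hyperplane[OF \<open>inj idx\<close> that] .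
    show "\<not> orthogonal_equipartition (moment_measure idx \<epsilon>) a b" for a b
      using not_orthogonal_equipartition_moment_measure[OF bij assms \<epsilon>] .
  qed simp
qed
end
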